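(* For any $n\ge 1$, the poset $(\mathsf{Tr}(n),\preccurlyeq)$ is a lattice, and for $u,v\in\mathsf{Tr}(n)$ the join of $u$ and $v$ is the word $\max(u_1,v_1)\max(u_2,v_2)\cdots\max(u_n,v_n)$.
   Context: A triword of size $n$ is a word $u=u_1\cdots u_n$ with $u_i\in\{0,1,2\}$, $u_1\ne 2$, and such that $u_i=0$ implies $u_j\neq 1$ for all $j>i$; $\mathsf{Tr}(n)$ is their set, ordered componentwise: $u\preccurlyeq v$ iff $u_i\le v_i$ for all $i\in[n]$. *)

theory Defs
  imports Main "HOL-Algebra.Lattice"
begin

text \<open>A word u_1...u_n is represented by a list of naturals of length n;
  the letter u_i is u ! (i - 1).\<close>

definition Tr :: "nat \<Rightarrow> nat list set" where
  "Tr n = {u. length u = n \<and> set u \<subseteq> {0, 1, 2}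
              \<and> (0 < n \<longrightarrow> u ! 0 \<noteq> 2)
              \<and> (\<forall>i j. i < j \<and> j < n \<and> u ! i = 0 \<longrightarrow> u ! j \<noteq> 1)}"

definition tw_le :: "nat \<Rightarrow> nat list \<Rightarrow> nat list \<Rightarrow> bool" where
  "tw_le n u v = (\<forall>i < n. u ! i \<le> v ! i)"

definition Tr_poset :: "nat \<Rightarrow> nat list gorder" where
  "Tr_poset n = \<lparr> carrier = Tr n, eq = (=), le = tw_le n \<rparr>"

end

theory Submission
  imports Defs
begin

text \<open>If \<open>max (u\<^sub>i, v\<^sub>i) = 0\<close> then \<open>u\<^sub>i = v\<^sub>i = 0\<close>, so neither word has a 1 after
  position \<open>i\<close> and neither does their componentwise maximum: \<open>Tr(n)\<close> is closed under
  componentwise maxima, which are therefore joins. The componentwise minimum need not be a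
  triword (\<open>min (121, 102) = 101\<close>), but turning every 1 that follows a 0 into a 0 yields the
  largest triword below it, and this is the meet.\<close>

lemma (in upper_semilattice) join_eq_least_upper:
  assumes "least L s (Upper L {x, y})" "x \<in> carrier L" "y \<in> carrier L"
  shows "x \<squnion> y = s"
  using assms by (auto intro: joinI least_unique)

lemma Tr_iff_nth:
  "u \<in> Tr n \<longleftrightarrow> length u = n \<and> (\<forall>i<n. u ! i \<le> 2) \<and> (0 < n \<longrightarrow> u ! 0 \<noteq> 2)
     \<and> (\<forall>i j. i < j \<and> j < n \<and> u ! i = 0 \<longrightarrow> u ! j \<noteq> 1)"
proof -
  have "set u \<subseteq> {0, 1, 2} \<longleftrightarrow> (\<forall>i<length u. u ! i \<le> (2::nat))"
    by (auto simp: in_set_conv_nth subset_iff)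
  then show ?thesis unfolding Tr_def by auto
qed

definition tw_max :: "nat \<Rightarrow> nat list \<Rightarrow> nat list \<Rightarrow> nat list" where
  "tw_max n u v = map (\<lambda>i. max (u ! i) (v ! i)) [0..<n]"

definition tw_min :: "nat \<Rightarrow> nat list \<Rightarrow> nat list \<Rightarrow> nat list" where
  "tw_min n u v = map (\<lambda>i. min (u ! i) (v ! i)) [0..<n]"

definition clear_ones_after_zero :: "nat \<Rightarrow> nat list \<Rightarrow> nat list" where
  "clear_ones_after_zero n w =
     map (\<lambda>i. if w ! i = 1 \<and> (\<exists>k<i. w ! k = 0) then 0 else w ! i) [0..<n]"

lemma tw_max_in_Tr:
  assumes u: "u \<in> Tr n" and v: "v \<in> Tr n"
  shows "tw_max n u v \<in> Tr n"
proof -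
  have "tw_max n u v ! j \<noteq> 1" if "i < j" "j < n" "tw_max n u v ! i = 0" for i j
  proof -
    from that have "u ! i = 0" "v ! i = 0" by (auto simp: tw_max_def)
    with u v that have "u ! j \<noteq> 1" "v ! j \<noteq> 1" by (auto simp: Tr_iff_nth)
    with that show ?thesis by (simp add: tw_max_def max_def)
  qed
  moreover have "length (tw_max n u v) = n" "\<forall>i<n. tw_max n u v ! i \<le> 2"
    "0 < n \<longrightarrow> tw_max n u v ! 0 \<noteq> 2"
    using u v by (auto simp: Tr_iff_nth tw_max_def)
  ultimately show ?thesis unfolding Tr_iff_nth by blast
qed

lemma clear_ones_after_zero_in_Tr:
  assumes "\<forall>i<n. w ! i \<le> 2" "0 < n \<longrightarrow> w ! 0 \<noteq> 2"
  shows "clear_ones_after_zero n w \<in> Tr n"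
proof -
  let ?c = "clear_ones_after_zero n w"
  have "\<forall>i<n. ?c ! i \<le> 2" "0 < n \<longrightarrow> ?c ! 0 \<noteq> 2"
    using assms by (auto simp: clear_ones_after_zero_def)
  moreover have "?c ! j \<noteq> 1" if "i < j" "j < n" "?c ! i = 0" for i j
  proof -
    from that have "w ! i = 0 \<or> (\<exists>k<i. w ! k = 0)"
      by (auto simp: clear_ones_after_zero_def split: if_splits)
    with \<open>i < j\<close> have "\<exists>k<j. w ! k = 0"
      by (auto intro: less_trans)
    with that(2) show ?thesis by (simp add: clear_ones_after_zero_def)
  qed
  moreover have "length ?c = n" by (simp add: clear_ones_after_zero_def)
  ultimately show ?thesis unfolding Tr_iff_nth by blast
qed

lemma clear_ones_after_zero_le: "tw_le n (clear_ones_after_zero n w) w"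
  by (simp add: tw_le_def clear_ones_after_zero_def)

lemma le_clear_ones_after_zero:
  assumes x: "x \<in> Tr n" and "tw_le n x w"
  shows "tw_le n x (clear_ones_after_zero n w)"
  unfolding tw_le_def
proof (intro allI impI)
  fix i assume i: "i < n"
  show "x ! i \<le> clear_ones_after_zero n w ! i"
  proof (cases "w ! i = 1 \<and> (\<exists>k<i. w ! k = 0)")
    case True
    then obtain k where "k < i" "w ! k = 0" by auto
    with i \<open>tw_le n x w\<close> have "x ! k = 0"
      by (metis tw_le_def le_zero_eq order.strict_trans)
    with x \<open>k < i\<close> i have "x ! i \<noteq> 1" by (auto simp: Tr_iff_nth)
    moreover from i \<open>tw_le n x w\<close> True have "x ! i \<le> 1" by (auto simp: tw_le_def)
    ultimately show ?thesis using True i by (simp add: clear_ones_after_zero_def)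
  next
    case False
    with i \<open>tw_le n x w\<close> show ?thesis by (auto simp: tw_le_def clear_ones_after_zero_def)
  qed
qed

lemma partial_order_Tr_poset: "partial_order (Tr_poset n)"
proof -
  have "x = y" if "tw_le n x y" "tw_le n y x" "x \<in> Tr n" "y \<in> Tr n" for x y
    using that unfolding tw_le_def Tr_iff_nth by (metis le_antisym nth_equalityI)
  then show ?thesis
    by unfold_locales (auto simp: Tr_poset_def tw_le_def intro: order_trans)
qed

lemma least_tw_max:
  assumes "u \<in> Tr n" "v \<in> Tr n"
  shows "least (Tr_poset n) (tw_max n u v) (Upper (Tr_poset n) {u, v})"
  using assms tw_max_in_Tr[OF assms]
  by (auto simp: least_def Upper_def Tr_poset_def tw_le_def tw_max_def)

lemma greatest_clear_ones_after_zero_tw_min: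
  assumes "u \<in> Tr n" "v \<in> Tr n"
  shows "greatest (Tr_poset n) (clear_ones_after_zero n (tw_min n u v))
           (Lower (Tr_poset n) {u, v})"
proof -
  let ?m = "tw_min n u v"
  have "clear_ones_after_zero n ?m \<in> Tr n"
    using assms by (intro clear_ones_after_zero_in_Tr) (auto simp: Tr_iff_nth tw_min_def)
  moreover have "tw_le n ?m u" "tw_le n ?m v"
    by (simp_all add: tw_le_def tw_min_def)
  moreover have "tw_le n x ?m" if "tw_le n x u" "tw_le n x v" for x
    using that by (simp add: tw_le_def tw_min_def)
  ultimately show ?thesis
    using assms clear_ones_after_zero_le[of n ?m] le_clear_ones_after_zero
    by (auto simp: greatest_def Lower_def Tr_poset_def tw_le_def) (meson order_trans)+
qed

lemma lattice_Tr_poset: "lattice (Tr_poset n)"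
proof -
  interpret partial_order "Tr_poset n" by (rule partial_order_Tr_poset)
  show ?thesis
  proof
    fix x y assume "x \<in> carrier (Tr_poset n)" "y \<in> carrier (Tr_poset n)"
    then have "x \<in> Tr n" "y \<in> Tr n" by (simp_all add: Tr_poset_def)
    then show "\<exists>s. least (Tr_poset n) s (Upper (Tr_poset n) {x, y})"
      and "\<exists>s. greatest (Tr_poset n) s (Lower (Tr_poset n) {x, y})"
      using least_tw_max greatest_clear_ones_after_zero_tw_min by blast+
  qed
qed

theorem mainTheorem5:
  fixes n :: nat
  assumes "1 \<le> n"
  shows "lattice (Tr_poset n) \<and>
         (\<forall>u \<in> Tr n. \<forall>v \<in> Tr n.
            join (Tr_poset n) u v = map (\<lambda>i. max (u ! i) (v ! i)) [0..<n])"
proof -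
  interpret lattice "Tr_poset n" by (rule lattice_Tr_poset)
  have "join (Tr_poset n) u v = tw_max n u v" if "u \<in> Tr n" "v \<in> Tr n" for u v
    using join_eq_least_upper[OF least_tw_max] that by (simp add: Tr_poset_def)
  then show ?thesis
    by (simp add: lattice_axioms tw_max_def)
qed

end
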